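(* Let $n\ge 0$ and $l$ be integers with $n\le l\le 2n$, and fix a linear ordering of the alphabet $\{E,D,N\}$. Then $$\sum_{W\in Sch_L(n,l)} q^{\mathrm{maj}(W)}=\frac{1}{[l-n+1]}\begin{bmatrix}2(l-n)\\ l-n\end{bmatrix}_q\begin{bmatrix} l\\ 2n-l\end{bmatrix}_q \quad\text{if } E<N,$$ and $$\sum_{W\in Sch_L(n,l)} q^{\mathrm{maj}(W)}=\frac{q^{\,l-n}}{[l-n+1]}\begin{bmatrix}2(l-n)\\ l-n\end{bmatrix}_q\begin{bmatrix} l\\ 2n-l\end{bmatrix}_q \quad\text{if } E>N.$$
   Context: A Delannoy path from $(0,0)$ to $(m,n)$ is a lattice path using only the steps $E=(1,0)$, $D=(1,1)$, $N=(0,1)$; a path with $l$ steps is identified with the word $W=w_1w_2\cdots w_l$ over the alphabet $\{E,D,N\}$. $Del(m,n,l)$ denotes the set of Delannoy paths from $(0,0)$ to $(m,n)$ with exactly $l$ steps. A Schröder $n$-path is a Delannoy path from $(0,0)$ to $(n,n)$ that never goes (strictly) above the line $y=x$; $Sch_L(n,l)$ is the set of Schröder $n$-paths with exactly $l$ steps. Given a linear ordering of $\{E,D,N\}$, an index $i$ with $1\le i\le l-1$ is a descent of $W$ if $w_i>w_{i+1}$, and $\mathrm{maj}(W)=\sum_{i \text{ descent}} i$. Notation: $[k]=1+q+\cdots+q^{k-1}$, $[k]!=[1][2]\cdots[k]$ (with $[0]!=1$), and $\begin{bmatrix}a\\ b\end{bmatrix}_q=\frac{[a]!}{[b]![a-b]!}$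 for $0\le b\le a$. *)

theory Defs
  imports "HOL-Computational_Algebra.Polynomial"
begin

datatype step = E | D | N

text \<open>Endpoint coordinates of a word: x = #E + #D, y = #N + #D.\<close>
definition xcoord :: "step list \<Rightarrow> nat" where
  "xcoord w = count_list w E + count_list w D"

definition ycoord :: "step list \<Rightarrow> nat" where
  "ycoord w = count_list w N + count_list w D"

definition Del :: "nat \<Rightarrow> nat \<Rightarrow> nat \<Rightarrow> step list set" where
  "Del m n l = {w. length w = l \<and> xcoord w = m \<and> ycoord w = n}"

definition Sch_L :: "nat \<Rightarrow> nat \<Rightarrow> step list set" where
  "Sch_L n l = {w \<in> Del n n l. \<forall>k \<le> length w. ycoord (take k w) \<le> xcoord (take k w)}"

text \<open>Major index w.r.t. the linear order on steps given by an injective rank r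
  (a < b iff r a < r b). Positions are 1-based: i is a descent iff w_i > w_(i+1).\<close>
definition maj :: "(step \<Rightarrow> nat) \<Rightarrow> step list \<Rightarrow> nat" where
  "maj r w = (\<Sum>i \<in> {1..<length w}. if r (w ! (i - 1)) > r (w ! i) then i else 0)"

definition qint :: "nat \<Rightarrow> rat poly" where
  "qint k = (\<Sum>i<k. monom 1 i)"

definition qfact :: "nat \<Rightarrow> rat poly" where
  "qfact k = (\<Prod>i\<in>{1..k}. qint i)"

definition qbinom :: "nat \<Rightarrow> nat \<Rightarrow> rat poly" where
  "qbinom a b = (if b \<le> a then qfact a div (qfact b * qfact (a - b)) else 0)"

end

theory Submission
  imports Defs
begin

text \<open>Deleting the diagonal steps from a Schroeder path with l steps leaves a ballot word
  with k = l - n letters E and k letters N, and the paths over a fixed ballot word v are exactly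
  the insertions of d = 2n - l letters D into v. Inserting c letters D into a D-free word v in all
  possible ways multiplies the maj generating function by the Gaussian coefficient
  [|v| + c choose c] (induction on v and c, splitting by the last letter), so the sum factors as
  [l choose d] times the maj generating function of ballot words. The same last-letter analysis
  shows that the latter satisfies the recurrence of the q-ballot numbers
  [a+b choose b] - t [a+b choose b-1], with t = q if E < N and t = 1 if N < E; on the diagonal
  these are [2k choose k]/[k+1] and q^k [2k choose k]/[k+1].\<close>

section \<open>Gaussian binomial coefficients\<close>

definition q :: "rat poly" where
  "q = [:0, 1:]"

lemma monom_1_eq_q_power: "monom 1 i = q ^ i"
  by (simp add: monom_altdef q_def)

lemma qint_eq_sum: "qint k = (\<Sum>i<k. q ^ i)"
  by (simp add: qint_def monom_1_eq_q_power)

lemma qint_0 [simp]: "qint 0 = 0"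
  by (simp add: qint_def)

lemma qint_Suc_0 [simp]: "qint (Suc 0) = 1"
  by (simp add: qint_eq_sum)

lemma qint_add: "qint (a + b) = qint a + q ^ a * qint b"
  by (induction b) (auto simp: qint_eq_sum algebra_simps power_add)

lemma qint_nonzero: "0 < k \<Longrightarrow> qint k \<noteq> 0"
proof
  assume "0 < k" "qint k = 0"
  have "poly (qint k) 1 = of_nat k"
    by (simp add: qint_eq_sum poly_sum q_def)
  with \<open>qint k = 0\<close> \<open>0 < k\<close> show False
    by simp
qed

lemma qfact_0 [simp]: "qfact 0 = 1"
  by (simp add: qfact_def)

lemma qfact_Suc: "qfact (Suc k) = qfact k * qint (Suc k)"
  by (simp add: qfact_def prod.cl_ivl_Suc)

lemma qfact_nonzero: "qfact k \<noteq> 0"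
  by (induction k) (auto simp: qfact_Suc qint_nonzero)

fun qbin :: "nat \<Rightarrow> nat \<Rightarrow> rat poly" where
  "qbin n 0 = 1"
| "qbin 0 (Suc k) = 0"
| "qbin (Suc n) (Suc k) = qbin n k + q ^ Suc k * qbin n (Suc k)"

lemma qbin_eq_0: "n < k \<Longrightarrow> qbin n k = 0"
  by (induction n k rule: qbin.induct) auto

lemma qbin_same [simp]: "qbin n n = 1"
  by (induction n) (auto simp: qbin_eq_0)

lemma qbin_qfact_shifts:
  assumes row: "\<And>k. k \<le> n \<Longrightarrow> qbin n k * qfact k * qfact (n - k) = qfact n"
    and "k \<le> n"
  shows "qbin n k * qfact (Suc k) * qfact (n - k) = qfact n * qint (Suc k)"
    and "qbin n (Suc k) * qfact (Suc k) * qfact (n - k) = qfact n * qint (n - k)"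
proof -
  show "qbin n k * qfact (Suc k) * qfact (n - k) = qfact n * qint (Suc k)"
    using row[OF \<open>k \<le> n\<close>] by (simp add: qfact_Suc algebra_simps)
  show "qbin n (Suc k) * qfact (Suc k) * qfact (n - k) = qfact n * qint (n - k)"
  proof (cases "k < n")
    case True
    then have "qfact (n - k) = qfact (n - Suc k) * qint (n - k)"
      by (metis Suc_diff_Suc qfact_Suc)
    with row[of "Suc k"] True show ?thesis
      by (simp add: algebra_simps)
  next
    case False
    then show ?thesis
      by (simp add: qbin_eq_0)
  qed
qed

lemma qbin_qfact: "k \<le> n \<Longrightarrow> qbin n k * qfact k * qfact (n - k) = qfact n"
proof (induction n arbitrary: k)
  case 0
  then show ?case by simp
next
  case (Suc n)
  show ?case
  proof (cases k)
    case 0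
    then show ?thesis by simp
  next
    case (Suc j)
    with Suc.prems have "j \<le> n" by simp
    note shifts = qbin_qfact_shifts[of n, OF Suc.IH this]
    have "qbin (Suc n) k * qfact k * qfact (Suc n - k)
        = qbin n j * qfact (Suc j) * qfact (n - j)
          + q ^ Suc j * (qbin n (Suc j) * qfact (Suc j) * qfact (n - j))"
      using \<open>k = Suc j\<close> by (simp add: algebra_simps)
    also have "\<dots> = qfact n * (qint (Suc j) + q ^ Suc j * qint (n - j))"
      by (simp only: shifts) (simp add: algebra_simps)
    also have "qint (Suc j) + q ^ Suc j * qint (n - j) = qint (Suc n)"
      using qint_add[of "Suc j" "n - j"] \<open>j \<le> n\<close> by simp
    finally show ?thesis
      by (simp add: qfact_Suc)
  qed
qed

lemma qbin_unique:
  assumes "p * qfact k * qfact (n - k) = qfact n" and "k \<le> n"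
  shows "p = qbin n k"
proof -
  have "p * (qfact k * qfact (n - k)) = qbin n k * (qfact k * qfact (n - k))"
    using assms qbin_qfact[OF \<open>k \<le> n\<close>] by (simp add: mult.assoc)
  then show ?thesis
    using qfact_nonzero by simp
qed

lemma qbinom_eq_qbin: "qbinom a b = qbin a b"
proof (cases "b \<le> a")
  case True
  then have "qfact a = qbin a b * (qfact b * qfact (a - b))"
    using qbin_qfact[of b a] by (simp add: mult.assoc)
  with True show ?thesis
    using qfact_nonzero by (simp add: qbinom_def)
next
  case False
  then show ?thesis
    by (simp add: qbinom_def qbin_eq_0)
qed

lemma qbin_Suc_Suc':
  assumes "k \<le> n"
  shows "qbin (Suc n) (Suc k) = q ^ (n - k) * qbin n k + qbin n (Suc k)"
proof -
  note shifts = qbin_qfact_shifts[of n, OF qbin_qfact assms]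
  have "(q ^ (n - k) * qbin n k + qbin n (Suc k)) * qfact (Suc k) * qfact (Suc n - Suc k)
      = q ^ (n - k) * (qbin n k * qfact (Suc k) * qfact (n - k))
        + qbin n (Suc k) * qfact (Suc k) * qfact (n - k)"
    by (simp add: algebra_simps)
  also have "\<dots> = qfact n * (qint (n - k) + q ^ (n - k) * qint (Suc k))"
    by (simp only: shifts) (simp add: algebra_simps)
  also have "qint (n - k) + q ^ (n - k) * qint (Suc k) = qint (Suc n)"
    using qint_add[of "n - k" "Suc k"] assms by simp
  finally show ?thesis
    using assms by (intro qbin_unique[symmetric]) (auto simp: qfact_Suc)
qed

lemma qbin_symmetric: "k \<le> n \<Longrightarrow> qbin n (n - k) = qbin n k"
  using qbin_qfact[of k n] by (intro qbin_unique[symmetric]) (auto simp: algebra_simps)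

lemma qbin_absorb:
  assumes "k \<le> n"
  shows "qbin n k * qint (n - k) = qbin n (Suc k) * qint (Suc k)"
proof -
  note shifts = qbin_qfact_shifts[of n, OF qbin_qfact assms]
  have "(qbin n k * qint (n - k)) * (qfact (Suc k) * qfact (n - k))
      = (qbin n (Suc k) * qint (Suc k)) * (qfact (Suc k) * qfact (n - k))"
    using shifts by (simp add: algebra_simps)
  then show ?thesis
    using qfact_nonzero by simp
qed

definition qchoose :: "nat \<Rightarrow> nat \<Rightarrow> rat poly" where
  "qchoose a b = qbin (a + b) b"

lemma qchoose_0_right [simp]: "qchoose a 0 = 1"
  by (simp add: qchoose_def)

lemma qchoose_0_left [simp]: "qchoose 0 b = 1"
  by (simp add: qchoose_def)

lemma qchoose_commute: "qchoose a b = qchoose b a"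
  using qbin_symmetric[of b "a + b"] by (simp add: qchoose_def add.commute)

lemma qchoose_Suc_Suc:
  "qchoose (Suc a) (Suc b) = qchoose (Suc a) b + q ^ Suc b * qchoose a (Suc b)"
  by (simp add: qchoose_def)

lemma qchoose_Suc_Suc':
  "qchoose (Suc a) (Suc b) = q ^ Suc a * qchoose (Suc a) b + qchoose a (Suc b)"
  using qbin_Suc_Suc'[of b "Suc a + b"] by (simp add: qchoose_def)

section \<open>The major index under appending a letter\<close>

lemma maj_Nil [simp]: "maj r [] = 0"
  by (simp add: maj_def)

lemma maj_singleton [simp]: "maj r [x] = 0"
  by (simp add: maj_def)

lemma maj_replicate [simp]: "maj r (replicate c y) = 0"
  unfolding maj_def by (rule sum.neutral) auto

lemma maj_snoc:
  "maj r (w @ [x]) = maj r w + (if w \<noteq> [] \<and> r x < r (last w) then length w else 0)"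
proof (cases "w = []")
  case True
  then show ?thesis by (simp add: maj_def)
next
  case False
  let ?d = "\<lambda>u i. if r (u ! i) < r (u ! (i - 1)) then i else 0"
  have "maj r (w @ [x]) = (\<Sum>i\<in>{1..<length w}. ?d (w @ [x]) i) + ?d (w @ [x]) (length w)"
    using False by (simp add: maj_def sum.atLeastLessThan_Suc)
  also have "(\<Sum>i\<in>{1..<length w}. ?d (w @ [x]) i) = maj r w"
    unfolding maj_def by (rule sum.cong) (auto simp: nth_append)
  also have "(w @ [x]) ! (length w - 1) = last w"
    using False by (simp add: nth_append last_conv_nth)
  finally show ?thesis
    using False by simp
qed

definition maj_gf :: "(step \<Rightarrow> nat) \<Rightarrow> step list set \<Rightarrow> rat poly" where
  "maj_gf r A = (\<Sum>u\<in>A. q ^ maj r u)"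

definition ending :: "step \<Rightarrow> step list set \<Rightarrow> step list set" where
  "ending y A = {u \<in> A. u \<noteq> [] \<and> last u = y}"

lemma maj_gf_snoc_image_eq_sum: "maj_gf r ((\<lambda>u. u @ [x]) ` A) = (\<Sum>u\<in>A. q ^ maj r (u @ [x]))"
  unfolding maj_gf_def by (subst sum.reindex) (auto simp: inj_on_def)

lemma maj_gf_snoc_image:
  assumes "\<And>u. u \<in> A \<Longrightarrow> u \<noteq> [] \<and> length u = m \<and> last u = y"
  shows "maj_gf r ((\<lambda>u. u @ [x]) ` A) = q ^ (if r x < r y then m else 0) * maj_gf r A"
proof -
  have "maj_gf r ((\<lambda>u. u @ [x]) ` A) = (\<Sum>u\<in>A. q ^ maj r (u @ [x]))"
    by (rule maj_gf_snoc_image_eq_sum)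
  also have "\<dots> = (\<Sum>u\<in>A. q ^ (if r x < r y then m else 0) * q ^ maj r u)"
    using assms by (intro sum.cong) (auto simp: maj_snoc power_add)
  finally show ?thesis
    by (simp add: maj_gf_def sum_distrib_left)
qed

lemma maj_gf_snoc_image_max:
  assumes "\<And>u. u \<in> A \<Longrightarrow> u \<noteq> [] \<Longrightarrow> r (last u) \<le> r x"
  shows "maj_gf r ((\<lambda>u. u @ [x]) ` A) = maj_gf r A"
  unfolding maj_gf_snoc_image_eq_sum unfolding maj_gf_def
  using assms by (intro sum.cong) (auto simp: maj_snoc not_less[symmetric])

lemma maj_gf_union:
  "finite A \<Longrightarrow> finite B \<Longrightarrow> A \<inter> B = {} \<Longrightarrow> maj_gf r (A \<union> B) = maj_gf r A + maj_gf r B"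
  by (simp add: maj_gf_def sum.union_disjoint)

lemma maj_gf_Un_ending:
  assumes "A = ending y1 A \<union> ending y2 A" "y1 \<noteq> y2" "finite A"
  shows "maj_gf r A = maj_gf r (ending y1 A) + maj_gf r (ending y2 A)"
proof -
  have "finite (ending y A)" for y
    using \<open>finite A\<close> by (simp add: ending_def)
  moreover have "ending y1 A \<inter> ending y2 A = {}"
    using \<open>y1 \<noteq> y2\<close> by (auto simp: ending_def)
  ultimately show ?thesis
    by (subst assms(1)) (simp add: maj_gf_union)
qed

lemma maj_gf_snoc_image_Un_ending:
  assumes "A = ending y1 A \<union> ending y2 A" "y1 \<noteq> y2" "finite A"
    and "\<And>u. u \<in> A \<Longrightarrow> length u = m"
  shows "maj_gf r ((\<lambda>u. u @ [x]) ` A)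
    = q ^ (if r x < r y1 then m else 0) * maj_gf r (ending y1 A)
      + q ^ (if r x < r y2 then m else 0) * maj_gf r (ending y2 A)"
proof -
  have "maj_gf r ((\<lambda>u. u @ [x]) ` ending y A)
      = q ^ (if r x < r y then m else 0) * maj_gf r (ending y A)" for y
    using assms(4) by (intro maj_gf_snoc_image) (auto simp: ending_def)
  moreover have "(\<lambda>u. u @ [x]) ` A = (\<lambda>u. u @ [x]) ` ending y1 A \<union> (\<lambda>u. u @ [x]) ` ending y2 A"
    by (subst assms(1)) (rule image_Un)
  moreover have "(\<lambda>u. u @ [x]) ` ending y1 A \<inter> (\<lambda>u. u @ [x]) ` ending y2 A = {}"
    using \<open>y1 \<noteq> y2\<close> by (auto simp: ending_def)
  moreover have "finite ((\<lambda>u. u @ [x]) ` ending y A)" for y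
    using \<open>finite A\<close> by (simp add: ending_def)
  ultimately show ?thesis
    by (simp add: maj_gf_union)
qed

lemma finite_lists_of_length: "finite {u :: step list. length u = m}"
proof -
  have "(UNIV :: step set) = {E, D, N}"
    using step.exhaust by auto
  then have "finite (UNIV :: step set)"
    by (metis finite.emptyI finite.insertI)
  then show ?thesis
    using finite_lists_length_eq[of "UNIV :: step set" m] by simp
qed

section \<open>Inserting diagonal steps\<close>

definition D_insertions :: "step list \<Rightarrow> nat \<Rightarrow> step list set" where
  "D_insertions v c = {u. filter (\<lambda>x. x \<noteq> D) u = v \<and> count_list u D = c}"

lemma length_filter_not_D: "length (filter (\<lambda>x. x \<noteq> D) u) + count_list u D = length u"
  by (induction u) auto

lemma length_D_insertions: "u \<in> D_insertions v c \<Longrightarrow> length u = length v + c"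
  using length_filter_not_D[of u] by (simp add: D_insertions_def)

lemma finite_D_insertions: "finite (D_insertions v c)"
  by (rule finite_subset[OF _ finite_lists_of_length[of "length v + c"]])
    (auto simp: length_D_insertions)

lemma D_insertions_Nil: "D_insertions [] c = {replicate c D}"
proof -
  have "u \<in> D_insertions [] c \<longleftrightarrow> u = replicate c D" for u
  proof
    assume u: "u \<in> D_insertions [] c"
    then have "\<forall>y\<in>set u. y = D"
      by (auto simp: D_insertions_def filter_empty_conv)
    then have "replicate (length u) D = u"
      by (rule replicate_length_same)
    with length_D_insertions[OF u] show "u = replicate c D"
      by simp
  qed (simp add: D_insertions_def count_list_eq_length_filter)
  then show ?thesis by blast
qed

lemma ending_D_D_insertions_0: "ending D (D_insertions v 0) = {}"
  by (auto simp: ending_def D_insertions_def count_list_0_iff dest: last_in_set)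

lemma ending_D_D_insertions_Suc:
  "ending D (D_insertions v (Suc c)) = (\<lambda>u. u @ [D]) ` D_insertions v c"
proof (intro set_eqI iffI)
  fix u assume "u \<in> ending D (D_insertions v (Suc c))"
  then obtain w where "u = w @ [D]" "w \<in> D_insertions v c"
    by (cases u rule: rev_cases) (auto simp: ending_def D_insertions_def)
  then show "u \<in> (\<lambda>u. u @ [D]) ` D_insertions v c" by blast
qed (auto simp: ending_def D_insertions_def)

lemma ending_snoc_D_insertions:
  assumes "x \<noteq> D"
  shows "ending x (D_insertions (v @ [x]) c) = (\<lambda>u. u @ [x]) ` D_insertions v c"
proof (intro set_eqI iffI)
  fix u assume "u \<in> ending x (D_insertions (v @ [x]) c)"
  then obtain w where "u = w @ [x]" "w \<in> D_insertions v c"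
    using assms by (cases u rule: rev_cases) (auto simp: ending_def D_insertions_def)
  then show "u \<in> (\<lambda>u. u @ [x]) ` D_insertions v c" by blast
qed (use assms in \<open>auto simp: ending_def D_insertions_def\<close>)

lemma D_insertions_eq_Un_ending:
  assumes "v \<noteq> []"
  shows "D_insertions v c = ending D (D_insertions v c) \<union> ending (last v) (D_insertions v c)"
proof -
  have "u \<noteq> [] \<and> (last u = D \<or> last u = last v)" if "u \<in> D_insertions v c" for u
  proof (cases u rule: rev_cases)
    case (snoc w y)
    with that show ?thesis
      by (cases "y = D") (auto simp: D_insertions_def)
  qed (use that assms in \<open>auto simp: D_insertions_def\<close>)
  then show ?thesis
    by (auto simp: ending_def)
qed

definition ins_gf_D :: "(step \<Rightarrow> nat) \<Rightarrow> step list \<Rightarrow> nat \<Rightarrow> rat poly" where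
  "ins_gf_D r v c = maj_gf r (ending D (D_insertions v c))"

definition ins_gf_last :: "(step \<Rightarrow> nat) \<Rightarrow> step list \<Rightarrow> nat \<Rightarrow> rat poly" where
  "ins_gf_last r v c = maj_gf r (ending (last v) (D_insertions v c))"

lemma ins_gf_D_0: "ins_gf_D r v 0 = 0"
  by (simp add: ins_gf_D_def ending_D_D_insertions_0 maj_gf_def)

lemma ins_gf_last_single:
  assumes "x \<noteq> D"
  shows "ins_gf_last r [x] c = q ^ (if r x < r D then c else 0)"
proof -
  have "ending x (D_insertions [x] c) = {replicate c D @ [x]}"
    using ending_snoc_D_insertions[OF assms, of "[]"] by (simp add: D_insertions_Nil)
  moreover have "maj r (replicate c D @ [x]) = (if r x < r D then c else 0)"
    by (cases c) (simp_all add: maj_snoc del: replicate_Suc)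
  ultimately show ?thesis
    by (simp add: ins_gf_last_def maj_gf_def)
qed

lemma last_not_D: "v \<noteq> [] \<Longrightarrow> D \<notin> set v \<Longrightarrow> last v \<noteq> D"
  using last_in_set by metis

lemma maj_gf_D_insertions_split:
  assumes "v \<noteq> []" "D \<notin> set v"
  shows "maj_gf r (D_insertions v c) = ins_gf_D r v c + ins_gf_last r v c"
  unfolding ins_gf_D_def ins_gf_last_def
  using D_insertions_eq_Un_ending[OF assms(1)] last_not_D[OF assms] finite_D_insertions
  by (intro maj_gf_Un_ending) auto

lemma snoc_image_D_insertions_split:
  assumes "v \<noteq> []" "D \<notin> set v"
  shows "maj_gf r ((\<lambda>u. u @ [x]) ` D_insertions v c)
    = q ^ (if r x < r D then length v + c else 0) * ins_gf_D r v c
      + q ^ (if r x < r (last v) then length v + c else 0) * ins_gf_last r v c"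
  unfolding ins_gf_D_def ins_gf_last_def
  using D_insertions_eq_Un_ending[OF assms(1)] last_not_D[OF assms] finite_D_insertions
    length_D_insertions
  by (intro maj_gf_snoc_image_Un_ending) auto

lemma ins_gf_D_Suc:
  assumes "v \<noteq> []" "D \<notin> set v"
  shows "ins_gf_D r v (Suc c)
    = ins_gf_D r v c + q ^ (if r D < r (last v) then length v + c else 0) * ins_gf_last r v c"
  using snoc_image_D_insertions_split[OF assms, of r D c]
  by (simp add: ins_gf_D_def ending_D_D_insertions_Suc)

lemma ins_gf_last_snoc:
  assumes "x \<noteq> D" "v \<noteq> []" "D \<notin> set v"
  shows "ins_gf_last r (v @ [x]) c
    = q ^ (if r x < r D then length v + c else 0) * ins_gf_D r v c
      + q ^ (if r x < r (last v) then length v + c else 0) * ins_gf_last r v c"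
  using snoc_image_D_insertions_split[OF assms(2,3), of r x c]
  by (simp add: ins_gf_last_def ending_snoc_D_insertions[OF assms(1)])

lemma ins_gf_D_Suc_closed:
  assumes "v \<noteq> []" "D \<notin> set v" "length v = Suc p"
    and last: "\<And>c. ins_gf_last r v c
      = q ^ maj r v * q ^ (if r D < r (last v) then 0 else c) * qchoose p c"
  shows "ins_gf_D r v (Suc c)
    = q ^ maj r v * q ^ (if r D < r (last v) then Suc p else 0) * qchoose (Suc p) c"
proof (induction c)
  case 0
  then show ?case
    using ins_gf_D_Suc[OF assms(1,2), of r 0] last[of 0] assms(3) by (simp add: ins_gf_D_0)
next
  case (Suc c)
  then show ?case
    using ins_gf_D_Suc[OF assms(1,2), of r "Suc c"] last[of "Suc c"] assms(3)
      qchoose_Suc_Suc[of p c]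
    by (simp add: power_add algebra_simps)
qed

lemma ins_gf_last_closed:
  assumes "inj r" "v \<noteq> []" "D \<notin> set v"
  shows "ins_gf_last r v c
    = q ^ maj r v * q ^ (if r D < r (last v) then 0 else c) * qchoose (length v - 1) c"
  using assms(2,3)
proof (induction v arbitrary: c rule: rev_induct)
  case Nil
  then show ?case by simp
next
  case (snoc x v)
  then have "x \<noteq> D" "D \<notin> set v"
    by auto
  with \<open>inj r\<close> have "r x \<noteq> r D"
    by (auto dest: injD)
  show ?case
  proof (cases "v = []")
    case True
    then show ?thesis
      using ins_gf_last_single[OF \<open>x \<noteq> D\<close>] \<open>r x \<noteq> r D\<close> by auto
  next
    case False
    then obtain p where p: "length v = Suc p"
      by (cases v) auto
    note last = snoc.IH[OF False \<open>D \<notin> set v\<close>, unfolded p diff_Suc_1]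
    note gf_D = ins_gf_D_Suc_closed[OF False \<open>D \<notin> set v\<close> p last]
    show ?thesis
    proof (cases c)
      case 0
      then show ?thesis
        using ins_gf_last_snoc[OF \<open>x \<noteq> D\<close> False \<open>D \<notin> set v\<close>, of r 0] last[of 0]
        by (simp add: ins_gf_D_0 maj_snoc False p power_add)
    next
      case (Suc c')
      \<comment> \<open>for each relative order of x, D and last v this is one of the two q-Pascal rules\<close>
      show ?thesis
        unfolding Suc ins_gf_last_snoc[OF \<open>x \<noteq> D\<close> False \<open>D \<notin> set v\<close>] gf_D last
        using p \<open>r x \<noteq> r D\<close>
        apply (cases "r D < r x"; cases "r D < r (last v)"; cases "r x < r (last v)")
        apply (simp_all add: maj_snoc False power_add algebra_simps)
        apply ((simp add: qchoose_Suc_Suc[of p c'] algebra_simps; fail)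
            | (simp add: qchoose_Suc_Suc'[of p c'] algebra_simps; fail))+
        done
    qed
  qed
qed

lemma maj_gf_D_insertions:
  assumes "inj r" "D \<notin> set v"
  shows "maj_gf r (D_insertions v c) = q ^ maj r v * qchoose (length v) c"
proof (cases "v = []")
  case True
  then show ?thesis
    by (simp add: D_insertions_Nil maj_gf_def)
next
  case False
  then obtain p where p: "length v = Suc p"
    by (cases v) auto
  note last = ins_gf_last_closed[OF assms(1) False assms(2), unfolded p diff_Suc_1]
  show ?thesis
  proof (cases c)
    case 0
    then show ?thesis
      using maj_gf_D_insertions_split[OF False assms(2)] last[of 0]
      by (simp add: ins_gf_D_0)
  next
    case (Suc c')
    have "maj_gf r (D_insertions v c) = ins_gf_D r v (Suc c') + ins_gf_last r v (Suc c')"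
      using maj_gf_D_insertions_split[OF False assms(2)] Suc by simp
    also have "\<dots> = q ^ maj r v * (q ^ (if r D < r (last v) then Suc p else 0) * qchoose (Suc p) c'
        + q ^ (if r D < r (last v) then 0 else Suc c') * qchoose p (Suc c'))"
      unfolding ins_gf_D_Suc_closed[OF False assms(2) p last] last by (simp add: algebra_simps)
    also have "q ^ (if r D < r (last v) then Suc p else 0) * qchoose (Suc p) c'
        + q ^ (if r D < r (last v) then 0 else Suc c') * qchoose p (Suc c')
        = qchoose (Suc p) (Suc c')"
      using qchoose_Suc_Suc[of p c'] qchoose_Suc_Suc'[of p c']
      by (cases "r D < r (last v)") (simp_all del: power_Suc)
    finally show ?thesis
      using p Suc by simp
  qed
qed

section \<open>Ballot words\<close>

definition ballot :: "step list \<Rightarrow> bool" where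
  "ballot w \<longleftrightarrow> (\<forall>k \<le> length w. count_list (take k w) N \<le> count_list (take k w) E)"

lemma ballot_Nil [simp]: "ballot []"
  by (simp add: ballot_def)

lemma ballot_imp_count_le: "ballot w \<Longrightarrow> count_list w N \<le> count_list w E"
  unfolding ballot_def by (metis order_refl take_all)

lemma ballot_snoc:
  "ballot (w @ [x]) \<longleftrightarrow> ballot w \<and> count_list (w @ [x]) N \<le> count_list (w @ [x]) E"
proof -
  have "(\<forall>k \<le> Suc (length w). P (take k (w @ [x])))
      \<longleftrightarrow> (\<forall>k \<le> length w. P (take k w)) \<and> P (w @ [x])" for P
    by (auto simp: le_Suc_eq)
  from this[of "\<lambda>u. count_list u N \<le> count_list u E"] show ?thesis
    unfolding ballot_def by simp
qed

lemma length_eq_counts: "length w = count_list w E + count_list w N + count_list w D"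
proof (induction w)
  case (Cons x w)
  then show ?case by (cases x) auto
qed simp

definition ballot_words :: "nat \<Rightarrow> nat \<Rightarrow> step list set" where
  "ballot_words a b = {w. D \<notin> set w \<and> count_list w E = a \<and> count_list w N = b \<and> ballot w}"

lemma length_ballot_words: "w \<in> ballot_words a b \<Longrightarrow> length w = a + b"
  using length_eq_counts[of w] by (simp add: ballot_words_def)

lemma finite_ballot_words: "finite (ballot_words a b)"
  by (rule finite_subset[OF _ finite_lists_of_length[of "a + b"]])
    (auto simp: length_ballot_words)

lemma ballot_words_empty: "a < b \<Longrightarrow> ballot_words a b = {}"
  by (auto simp: ballot_words_def dest: ballot_imp_count_le)

lemma ballot_words_0: "ballot_words a 0 = {replicate a E}"
proof -
  have "w \<in> ballot_words a 0 \<longleftrightarrow> w = replicate a E" for w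
  proof
    assume w: "w \<in> ballot_words a 0"
    then have "\<forall>y\<in>set w. y = E"
      by (auto simp: ballot_words_def count_list_0_iff intro: step.exhaust)
    then have "replicate (length w) E = w"
      by (rule replicate_length_same)
    with length_ballot_words[OF w] show "w = replicate a E"
      by simp
  next
    assume "w = replicate a E"
    moreover have "N \<notin> set (take k (replicate a E))" for k
      by (auto dest: in_set_takeD)
    ultimately show "w \<in> ballot_words a 0"
      by (auto simp: ballot_words_def ballot_def count_list_eq_length_filter)
  qed
  then show ?thesis by blast
qed

lemma ending_E_ballot_words_Suc:
  "ending E (ballot_words (Suc a) b) = (\<lambda>w. w @ [E]) ` ballot_words a b"
proof (intro set_eqI iffI)
  fix u assume "u \<in> ending E (ballot_words (Suc a) b)"
  then obtain w where "u = w @ [E]" "w \<in> ballot_words a b"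
    by (cases u rule: rev_cases) (auto simp: ending_def ballot_words_def ballot_snoc)
  then show "u \<in> (\<lambda>w. w @ [E]) ` ballot_words a b" by blast
qed (auto simp: ending_def ballot_words_def ballot_snoc le_Suc_eq dest: ballot_imp_count_le)

lemma ending_N_ballot_words_Suc:
  assumes "b < a"
  shows "ending N (ballot_words a (Suc b)) = (\<lambda>w. w @ [N]) ` ballot_words a b"
proof (intro set_eqI iffI)
  fix u assume "u \<in> ending N (ballot_words a (Suc b))"
  then obtain w where "u = w @ [N]" "w \<in> ballot_words a b"
    by (cases u rule: rev_cases) (auto simp: ending_def ballot_words_def ballot_snoc)
  then show "u \<in> (\<lambda>w. w @ [N]) ` ballot_words a b" by blast
qed (use assms in \<open>auto simp: ending_def ballot_words_def ballot_snoc\<close>)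

lemma ballot_words_eq_Un_ending:
  assumes "0 < a + b"
  shows "ballot_words a b = ending E (ballot_words a b) \<union> ending N (ballot_words a b)"
proof -
  have "w \<noteq> [] \<and> (last w = E \<or> last w = N)" if w: "w \<in> ballot_words a b" for w
  proof -
    have "w \<noteq> []"
      using length_ballot_words[OF w] assms by auto
    moreover have "last w \<noteq> D"
      using w \<open>w \<noteq> []\<close> last_in_set by (fastforce simp: ballot_words_def)
    ultimately show ?thesis
      by (cases "last w") auto
  qed
  then show ?thesis
    by (auto simp: ending_def)
qed

definition ballot_gf :: "(step \<Rightarrow> nat) \<Rightarrow> nat \<Rightarrow> nat \<Rightarrow> rat poly" where
  "ballot_gf r a b = maj_gf r (ballot_words a b)"

definition ballot_gf_ending :: "(step \<Rightarrow> nat) \<Rightarrow> step \<Rightarrow> nat \<Rightarrow> nat \<Rightarrow> rat poly" where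
  "ballot_gf_ending r y a b = maj_gf r (ending y (ballot_words a b))"

lemma ballot_gf_0: "ballot_gf r a 0 = 1"
  by (simp add: ballot_gf_def ballot_words_0 maj_gf_def)

lemma ballot_gf_empty: "a < b \<Longrightarrow> ballot_gf r a b = 0"
  by (simp add: ballot_gf_def ballot_words_empty maj_gf_def)

lemma ballot_gf_split:
  "0 < a + b \<Longrightarrow> ballot_gf r a b = ballot_gf_ending r E a b + ballot_gf_ending r N a b"
  unfolding ballot_gf_def ballot_gf_ending_def
  using ballot_words_eq_Un_ending finite_ballot_words by (intro maj_gf_Un_ending) auto

lemma maj_gf_snoc_image_ballot_words:
  assumes "0 < a + b"
  shows "maj_gf r ((\<lambda>w. w @ [x]) ` ballot_words a b)
    = q ^ (if r x < r E then a + b else 0) * ballot_gf_ending r E a b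
      + q ^ (if r x < r N then a + b else 0) * ballot_gf_ending r N a b"
  unfolding ballot_gf_ending_def
  using ballot_words_eq_Un_ending[OF assms] finite_ballot_words length_ballot_words
  by (intro maj_gf_snoc_image_Un_ending) auto

lemma maj_gf_snoc_image_ballot_words_max:
  assumes "r E \<le> r x" "r N \<le> r x"
  shows "maj_gf r ((\<lambda>w. w @ [x]) ` ballot_words a b) = ballot_gf r a b"
proof -
  have "r (last w) \<le> r x" if "w \<in> ballot_words a b" "w \<noteq> []" for w
  proof -
    have "last w \<noteq> D"
      using that last_in_set by (fastforce simp: ballot_words_def)
    with assms show ?thesis
      by (cases "last w") auto
  qed
  then show ?thesis
    unfolding ballot_gf_def by (rule maj_gf_snoc_image_max)
qed

lemma ballot_gf_Suc_Suc_EN: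
  assumes "r E < r N" "b < a"
  shows "ballot_gf r (Suc a) (Suc b)
    = ballot_gf r a (Suc b) + (q ^ (a + b + 1) - 1) * ballot_gf r a b + ballot_gf r (Suc a) b"
proof -
  have N_last: "ballot_gf_ending r N a' (Suc b') = ballot_gf r a' b'" if "b' < a'" for a' b'
    using maj_gf_snoc_image_ballot_words_max[of r N a' b'] assms(1) that
    by (simp add: ballot_gf_ending_def ending_N_ballot_words_Suc)
  have "ballot_gf_ending r E (Suc a) (Suc b)
      = ballot_gf_ending r E a (Suc b) + q ^ (a + b + 1) * ballot_gf r a b"
    using maj_gf_snoc_image_ballot_words[of a "Suc b" r E] assms N_last[of b a]
    by (simp add: ballot_gf_ending_def ending_E_ballot_words_Suc)
  moreover have "ballot_gf_ending r E a (Suc b) = ballot_gf r a (Suc b) - ballot_gf r a b"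
    using ballot_gf_split[of a "Suc b" r] N_last[of b a] assms(2) by simp
  ultimately show ?thesis
    using ballot_gf_split[of "Suc a" "Suc b" r] N_last[of b "Suc a"] assms(2)
    by (simp add: algebra_simps)
qed

lemma ballot_gf_Suc_Suc_NE:
  assumes "r N < r E" "b \<le> a"
  shows "ballot_gf r (Suc a) (Suc b)
    = ballot_gf r a (Suc b) + (q ^ (a + b + 1) - 1) * ballot_gf r a b + ballot_gf r (Suc a) b"
proof -
  have E_last: "ballot_gf_ending r E (Suc a') b' = ballot_gf r a' b'" for a' b'
    using maj_gf_snoc_image_ballot_words_max[of r E a' b'] assms(1)
    by (simp add: ballot_gf_ending_def ending_E_ballot_words_Suc)
  have "ballot_gf_ending r N (Suc a) (Suc b)
      = q ^ (a + b + 1) * ballot_gf r a b + ballot_gf_ending r N (Suc a) b"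
    using maj_gf_snoc_image_ballot_words[of "Suc a" b r N] assms E_last[of a b]
    by (simp add: ballot_gf_ending_def ending_N_ballot_words_Suc)
  moreover have "ballot_gf_ending r N (Suc a) b = ballot_gf r (Suc a) b - ballot_gf r a b"
    using ballot_gf_split[of "Suc a" b r] E_last[of a b] by simp
  ultimately show ?thesis
    using ballot_gf_split[of "Suc a" "Suc b" r] E_last[of a "Suc b"]
    by (simp add: algebra_simps)
qed

lemma ballot_gf_diag_EN: "r E < r N \<Longrightarrow> ballot_gf r (Suc a) (Suc a) = ballot_gf r (Suc a) a"
  using ballot_gf_split[of "Suc a" "Suc a" r]
    maj_gf_snoc_image_ballot_words_max[of r N "Suc a" a]
  by (simp add: ballot_gf_ending_def ending_E_ballot_words_Suc ending_N_ballot_words_Suc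
      ballot_words_empty maj_gf_def)

section \<open>q-ballot numbers\<close>

lemma qchoose_absorb: "(q ^ Suc b - 1) * qchoose a (Suc b) = (q ^ (a + b + 1) - 1) * qchoose a b"
proof (cases a)
  case 0
  then show ?thesis by simp
next
  case (Suc a')
  have pascal: "qchoose a (Suc b) = q ^ a * qchoose a b + qchoose a' (Suc b)"
    using qchoose_Suc_Suc'[of a' b] Suc by simp
  have "q ^ Suc b * qchoose a (Suc b) = q ^ (a + b + 1) * qchoose a b + q ^ Suc b * qchoose a' (Suc b)"
    by (simp add: pascal power_add algebra_simps)
  also have "q ^ Suc b * qchoose a' (Suc b) = qchoose a (Suc b) - qchoose a b"
    using qchoose_Suc_Suc[of a' b] Suc by simp
  finally show ?thesis
    by (simp add: algebra_simps)
qed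

lemma qchoose_Suc_Suc_ballot:
  "qchoose (Suc a) (Suc b)
    = qchoose a (Suc b) + (q ^ (a + b + 1) - 1) * qchoose a b + qchoose (Suc a) b"
  using qchoose_Suc_Suc[of a b] qchoose_absorb[of b a] by (simp add: algebra_simps)

text \<open>A q-analogue of the ballot number (a+b choose b) - (a+b choose b-1); the weight t is
  q when E < N and 1 when N < E.\<close>
definition qballot :: "rat poly \<Rightarrow> nat \<Rightarrow> nat \<Rightarrow> rat poly" where
  "qballot t a b = qchoose a b - (if b = 0 then 0 else t * qchoose (Suc a) (b - 1))"

lemma qballot_0 [simp]: "qballot t a 0 = 1"
  by (simp add: qballot_def)

lemma qballot_Suc_Suc:
  "qballot t (Suc a) (Suc b)
    = qballot t a (Suc b) + (q ^ (a + b + 1) - 1) * qballot t a b + qballot t (Suc a) b"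
proof (cases b)
  case 0
  then show ?thesis
    using qchoose_Suc_Suc_ballot[of a 0] by (simp add: qballot_def algebra_simps)
next
  case (Suc b')
  then show ?thesis
    by (simp add: qballot_def qchoose_Suc_Suc_ballot[of a "Suc b'"]
        qchoose_Suc_Suc_ballot[of "Suc a" b'] algebra_simps)
qed

lemma qballot_q_diag: "qballot q (Suc a) (Suc a) = qballot q (Suc a) a"
proof (cases a)
  case 0
  then show ?thesis
    using qchoose_Suc_Suc[of 0 0] by (simp add: qballot_def)
next
  case (Suc c)
  then show ?thesis
    using qchoose_Suc_Suc[of a a] qchoose_Suc_Suc[of "Suc a" c] qchoose_commute[of a "Suc a"]
    by (simp add: qballot_def algebra_simps)
qed

lemma qballot_1_above_diag: "qballot 1 a (Suc a) = 0"
  by (simp add: qballot_def qchoose_commute)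

lemma ballot_gf_EN: "r E < r N \<Longrightarrow> b \<le> a \<Longrightarrow> ballot_gf r a b = qballot q a b"
proof (induction b arbitrary: a)
  case 0
  then show ?case by (simp add: ballot_gf_0)
next
  case (Suc b)
  have row_b: "ballot_gf r a' b = qballot q a' b" if "b \<le> a'" for a'
    using Suc.IH Suc.prems(1) that .
  show ?case
    using \<open>Suc b \<le> a\<close>
  proof (induction a)
    case (Suc a)
    show ?case
    proof (cases "b = a")
      case True
      then show ?thesis
        using ballot_gf_diag_EN[OF \<open>r E < r N\<close>, of a] row_b[of "Suc a"] qballot_q_diag
        by simp
    next
      case False
      with Suc.prems have "b < a" by simp
      then show ?thesis
        using ballot_gf_Suc_Suc_EN[OF \<open>r E < r N\<close>] Suc.IH row_b qballot_Suc_Suc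
        by simp
    qed
  qed simp
qed

lemma ballot_gf_NE: "r N < r E \<Longrightarrow> b \<le> a \<Longrightarrow> ballot_gf r a b = qballot 1 a b"
proof (induction b arbitrary: a)
  case 0
  then show ?case by (simp add: ballot_gf_0)
next
  case (Suc b)
  have row_b: "ballot_gf r a' b = qballot 1 a' b" if "b \<le> a'" for a'
    using Suc.IH Suc.prems(1) that .
  show ?case
    using \<open>Suc b \<le> a\<close>
  proof (induction a)
    case (Suc a)
    then have "b \<le> a" by simp
    have "ballot_gf r a (Suc b) = qballot 1 a (Suc b)"
      using Suc.IH \<open>b \<le> a\<close> ballot_gf_empty[of a "Suc b" r] qballot_1_above_diag[of a]
      by (cases "b = a") auto
    then show ?case
      using ballot_gf_Suc_Suc_NE[OF \<open>r N < r E\<close> \<open>b \<le> a\<close>] row_b qballot_Suc_Suc \<open>b \<le> a\<close>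
      by simp
  qed simp
qed

lemma qballot_diag_eq_qbin:
  assumes "0 < k"
  shows "qballot t k k = qbin (2 * k) k - t * qbin (2 * k) (k - 1)"
proof -
  have "Suc k + (k - 1) = 2 * k"
    using assms by simp
  then show ?thesis
    using assms by (simp add: qballot_def qchoose_def mult_2)
qed

lemma qbin_diag_absorb:
  assumes "0 < k"
  shows "qbin (2 * k) (k - 1) * qint (Suc k) = qbin (2 * k) k * qint k"
  using qbin_absorb[of "k - 1" "2 * k"] assms by (simp add: Suc_diff_le)

lemma qballot_q_diag_qint: "qballot q k k * qint (Suc k) = qbin (2 * k) k"
proof (cases "k = 0")
  case False
  then have "qballot q k k * qint (Suc k)
      = qbin (2 * k) k * qint (Suc k) - q * (qbin (2 * k) (k - 1) * qint (Suc k))"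
    by (simp add: qballot_diag_eq_qbin algebra_simps)
  also have "\<dots> = qbin (2 * k) k * (qint (Suc k) - q * qint k)"
    using False qbin_diag_absorb[of k] by (simp add: algebra_simps)
  also have "qint (Suc k) - q * qint k = 1"
    using qint_add[of 1 k] by simp
  finally show ?thesis
    by simp
qed simp

lemma qballot_1_diag_qint: "qballot 1 k k * qint (Suc k) = q ^ k * qbin (2 * k) k"
proof (cases "k = 0")
  case False
  then have "qballot 1 k k * qint (Suc k)
      = qbin (2 * k) k * qint (Suc k) - qbin (2 * k) (k - 1) * qint (Suc k)"
    by (simp add: qballot_diag_eq_qbin algebra_simps)
  also have "\<dots> = qbin (2 * k) k * (qint (Suc k) - qint k)"
    using False qbin_diag_absorb[of k] by (simp add: algebra_simps)
  also have "qint (Suc k) - qint k = q ^ k"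
    using qint_add[of k 1] by simp
  finally show ?thesis
    by simp
qed simp

section \<open>Schroeder paths\<close>

lemma count_list_filter_not_D: "y \<noteq> D \<Longrightarrow> count_list (filter (\<lambda>x. x \<noteq> D) u) y = count_list u y"
  by (induction u) auto

lemma ballot_filter_not_D: "ballot (filter (\<lambda>x. x \<noteq> D) u) \<longleftrightarrow> ballot u"
proof (induction u rule: rev_induct)
  case (snoc x u)
  then show ?case
    by (cases "x = D") (auto simp: ballot_snoc count_list_filter_not_D dest: ballot_imp_count_le)
qed simp

lemma Sch_L_eq_UN_D_insertions:
  assumes "n \<le> l" "l \<le> 2 * n"
  shows "Sch_L n l = (\<Union>v\<in>ballot_words (l - n) (l - n). D_insertions v (2 * n - l))"
proof -
  have "u \<in> Sch_L n l \<longleftrightarrow>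
      filter (\<lambda>x. x \<noteq> D) u \<in> ballot_words (l - n) (l - n) \<and> count_list u D = 2 * n - l" for u
    using length_eq_counts[of u] assms
    by (auto simp: Sch_L_def Del_def xcoord_def ycoord_def ballot_def[symmetric]
        ballot_words_def count_list_filter_not_D ballot_filter_not_D)
  then show ?thesis
    by (auto simp: D_insertions_def)
qed

lemma maj_gf_Sch_L:
  assumes "inj r" "n \<le> l" "l \<le> 2 * n"
  shows "maj_gf r (Sch_L n l) = qbin l (2 * n - l) * ballot_gf r (l - n) (l - n)"
proof -
  define k d where "k = l - n" and "d = 2 * n - l"
  have "maj_gf r (Sch_L n l) = (\<Sum>v\<in>ballot_words k k. maj_gf r (D_insertions v d))"
    unfolding Sch_L_eq_UN_D_insertions[OF assms(2,3)] maj_gf_def k_def d_def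
    by (rule sum.UNION_disjoint)
      (simp_all add: finite_ballot_words finite_D_insertions, auto simp: D_insertions_def)
  also have "\<dots> = (\<Sum>v\<in>ballot_words k k. q ^ maj r v * qchoose (k + k) d)"
    using maj_gf_D_insertions[OF assms(1)]
    by (intro sum.cong) (auto simp: ballot_words_def length_ballot_words)
  also have "qchoose (k + k) d = qbin l (2 * n - l)"
    using assms by (simp add: qchoose_def k_def d_def)
  finally show ?thesis
    by (simp add: ballot_gf_def maj_gf_def sum_distrib_left k_def ac_simps)
qed

theorem theorem1p1:
  fixes n l :: nat and r :: "step \<Rightarrow> nat"
  assumes "inj r" and "n \<le> l" and "l \<le> 2 * n"
  shows "(r E < r N \<longrightarrow>
           (\<Sum>W\<in>Sch_L n l. monom 1 (maj r W)) =
             qbinom (2 * (l - n)) (l - n) * qbinom l (2 * n - l) div qint (l - n + 1))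
       \<and> (r N < r E \<longrightarrow>
           (\<Sum>W\<in>Sch_L n l. monom 1 (maj r W)) =
             monom 1 (l - n) * qbinom (2 * (l - n)) (l - n) * qbinom l (2 * n - l) div qint (l - n + 1))"
proof -
  define k where "k = l - n"
  have factored: "(\<Sum>W\<in>Sch_L n l. monom 1 (maj r W)) = ballot_gf r k k * qbinom l (2 * n - l)"
    using maj_gf_Sch_L[OF assms]
    by (simp add: maj_gf_def monom_1_eq_q_power k_def qbinom_eq_qbin mult.commute)
  have cancel: "x * qint (Suc k) * y div qint (Suc k) = x * y" for x y
  proof -
    have "x * qint (Suc k) * y = qint (Suc k) * (x * y)"
      by (simp add: ac_simps)
    then show ?thesis
      using qint_nonzero[of "Suc k"] by simp
  qed
  have "l - n + 1 = Suc k" and "2 * (l - n) = 2 * k"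
    by (simp_all add: k_def)
  moreover have "r E < r N \<Longrightarrow> ballot_gf r k k * qint (Suc k) = qbinom (2 * k) k"
    using ballot_gf_EN[of r k k] qballot_q_diag_qint[of k] by (simp add: qbinom_eq_qbin)
  moreover have "r N < r E \<Longrightarrow> ballot_gf r k k * qint (Suc k) = monom 1 k * qbinom (2 * k) k"
    using ballot_gf_NE[of r k k] qballot_1_diag_qint[of k]
    by (simp add: qbinom_eq_qbin monom_1_eq_q_power)
  ultimately show ?thesis
    by (metis factored cancel k_def mult.assoc)
qed

end
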